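(* Let $N\ge 4$ and consider a box-kite in the $2^N$-dimensional Cayley–Dickson algebra, with strut constant $S$, zigzag L-indices $(a,b,c)$ (in CPO) and strut-opposite L-indices $f=a\oplus S$, $e=b\oplus S$, $d=c\oplus S$. Call the strut through a zigzag index $z$ and its strut-opposite $v=z\oplus S$ reversed if $(z,S,v)$ is not CPO (i.e. $e_Se_z=e_v$ rather than $e_ze_S=e_v$). Then the number of reversed struts is $0$ (Type I) or $2$ (Type II); in particular no box-kite has exactly one reversed strut ("Type III") or exactly three reversed struts ("Type IV").
   Context: Cayley–Dickson algebra of dimension $2^N$: basis units $e_0=1,e_1,\dots,e_{2^N-1}$ with $e_pe_q=\pm e_{p\oplus q}$ ($\oplus$ = bitwise XOR). A triple $(p,q,r)$ of distinct nonzero indices with $p\oplus q=r$ is CPO (a trip) if $e_pe_q=+e_r$; conventions: $(1,2,3)$ CPO; $(L,G,G+L)$ CPO for $G$ a power of two and $0<L<G$; if $(u,v,w)$ CPO with indices $<G$ then $(u,w+G,v+G)$ CPO. Let $G=2^{N-1}$, fix $0<S<G$ and $X=G+S$. For $0<l<G$, $l\ne S$, the assessor with L-index $l$ is the plane spanned by $e_l$ and $e_{l\oplus X}$ (its U-unit); its diagonals are the lines spanned by $e_l\pm e_{l\oplus X}$. Two assessors mutually zero-divide if some nonzero point of a diagonal of one times some nonzero point of a diagonal of the other is $0$. A box-kite is a configuration of six assessors with L-indices $a,b,c,d,e,f<G$ such that $a\oplus f=b\oplus e=c\oplus d=S$ (struts), $(a,b,c),(a,d,e),(d,b,f),(e,f,c)$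 are CPO trips (sails), and every pair of assessors not on a common strut mutually zero-divides. Among the sails, exactly one, the zigzag $(a,b,c)$ (written CPO, $a$ smallest), has all three edges of negative sign, i.e. each zero product pairs oppositely sloped diagonals, such as $(e_a+e_A)(e_b-e_B)=0$. *)

theory Defs
  imports Complex_Main
begin

text \<open>Sign of conjugation on a basis unit: conj e_0 = e_0, conj e_k = - e_k for k > 0.\<close>
definition cj :: "nat \<Rightarrow> int" where
  "cj k = (if k = 0 then 1 else -1)"

text \<open>Cayley--Dickson sign table in dimension 2^n: for p, q < 2^n,
  e_p e_q = cdsign n p q * e_(p xor q).  Doubling rule
  (a,b)(c,d) = (ac - conj(d) b, d a + b conj(c)), which yields the conventions
  (1,2,3) CPO, (L,G,G+L) CPO, and (u,v,w) CPO ==> (u,w+G,v+G) CPO.\<close>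
fun cdsign :: "nat \<Rightarrow> nat \<Rightarrow> nat \<Rightarrow> int" where
  "cdsign 0 p q = 1"
| "cdsign (Suc m) p q =
     (if p < 2^m \<and> q < 2^m then cdsign m p q
      else if p < 2^m then cdsign m (q - 2^m) p
      else if q < 2^m then cdsign m (p - 2^m) q * cj q
      else - cj (q - 2^m) * cdsign m (q - 2^m) (p - 2^m))"

text \<open>Elements of the 2^N-dimensional algebra: coefficient functions (indices < 2^N).\<close>
definition cdmult :: "nat \<Rightarrow> (nat \<Rightarrow> real) \<Rightarrow> (nat \<Rightarrow> real) \<Rightarrow> (nat \<Rightarrow> real)" where
  "cdmult N x y = (\<lambda>r. \<Sum>p<2^N. \<Sum>q<2^N.
       if xor p q = r then of_int (cdsign N p q) * x p * y q else 0)"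

definition unit_vec :: "nat \<Rightarrow> nat \<Rightarrow> real" where
  "unit_vec k = (\<lambda>i. if i = k then 1 else 0)"

definition scal :: "real \<Rightarrow> (nat \<Rightarrow> real) \<Rightarrow> (nat \<Rightarrow> real)" where
  "scal \<alpha> x = (\<lambda>i. \<alpha> * x i)"

definition cpo :: "nat \<Rightarrow> nat \<Rightarrow> nat \<Rightarrow> nat \<Rightarrow> bool" where
  "cpo N p q r \<longleftrightarrow> p \<noteq> 0 \<and> q \<noteq> 0 \<and> r \<noteq> 0 \<and> p \<noteq> q \<and> q \<noteq> r \<and> p \<noteq> r
     \<and> p < 2^N \<and> q < 2^N \<and> r < 2^N \<and> xor p q = r \<and> cdsign N p q = 1"

definition diag :: "nat \<Rightarrow> nat \<Rightarrow> nat \<Rightarrow> real \<Rightarrow> (nat \<Rightarrow> real)" where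
  "diag N S l s = (\<lambda>i. unit_vec l i + s * unit_vec (xor l (2^(N-1) + S)) i)"

definition is_assessor :: "nat \<Rightarrow> nat \<Rightarrow> nat \<Rightarrow> bool" where
  "is_assessor N S l \<longleftrightarrow> 0 < l \<and> l < 2^(N-1) \<and> l \<noteq> S"

definition zero_prod :: "nat \<Rightarrow> nat \<Rightarrow> nat \<Rightarrow> nat \<Rightarrow> real \<Rightarrow> real \<Rightarrow> bool" where
  "zero_prod N S l m s t \<longleftrightarrow> (\<exists>\<alpha> \<beta>. \<alpha> \<noteq> 0 \<and> \<beta> \<noteq> 0 \<and>
      (cdmult N (scal \<alpha> (diag N S l s)) (scal \<beta> (diag N S m t)) = (\<lambda>_. 0)
       \<or> cdmult N (scal \<beta> (diag N S m t)) (scal \<alpha> (diag N S l s)) = (\<lambda>_. 0)))"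

definition mutually_zd :: "nat \<Rightarrow> nat \<Rightarrow> nat \<Rightarrow> nat \<Rightarrow> bool" where
  "mutually_zd N S l m \<longleftrightarrow> (\<exists>s\<in>{1,-1}. \<exists>t\<in>{1,-1}. zero_prod N S l m s t)"

definition neg_edge :: "nat \<Rightarrow> nat \<Rightarrow> nat \<Rightarrow> nat \<Rightarrow> bool" where
  "neg_edge N S l m \<longleftrightarrow> mutually_zd N S l m \<and>
     (\<forall>s\<in>{1,-1}. \<forall>t\<in>{1,-1}. zero_prod N S l m s t \<longrightarrow> t = - s)"

definition box_kite :: "nat \<Rightarrow> nat \<Rightarrow> nat \<Rightarrow> nat \<Rightarrow> nat \<Rightarrow> nat \<Rightarrow> nat \<Rightarrow> nat \<Rightarrow> bool" where
  "box_kite N S a b c d e f \<longleftrightarrow>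
     (\<forall>l\<in>{a,b,c,d,e,f}. is_assessor N S l)
     \<and> xor a f = S \<and> xor b e = S \<and> xor c d = S
     \<and> cpo N a b c \<and> cpo N a d e \<and> cpo N d b f \<and> cpo N e f c
     \<and> (\<forall>l\<in>{a,b,c,d,e,f}. \<forall>m\<in>{a,b,c,d,e,f}.
          l \<noteq> m \<and> xor l m \<noteq> S \<longrightarrow> mutually_zd N S l m)"

end

theory Submission
  imports Defs
begin

text \<open>
  Only the four sails are used. Anticommutativity and cyclicity of the sign table turn the
  sails into the signs of \<open>e\<^sub>a e\<^sub>b\<close>, \<open>e\<^sub>a e\<^sub>e\<close>, \<open>e\<^sub>b e\<^sub>f\<close> and \<open>e\<^sub>c e\<^sub>f\<close>. The remaining
  ingredient holds throughout the Cayley--Dickson tower: if \<open>x, y, z\<close> span seven distinct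
  nonzero indices, the signs of the seven products \<open>x y\<close>, \<open>x z\<close>, \<open>x (y \<oplus> z)\<close>, \<open>y z\<close>,
  \<open>y (x \<oplus> z)\<close>, \<open>(x \<oplus> y) z\<close>, \<open>(x \<oplus> y) (x \<oplus> z)\<close> multiply to \<open>+1\<close>, because the
  corrections introduced by each doubling step cancel. For \<open>x = a\<close>, \<open>y = b\<close>, \<open>z = S\<close>
  the sail signs then force \<open>e\<^sub>a e\<^sub>S\<close>, \<open>e\<^sub>b e\<^sub>S\<close>, \<open>e\<^sub>c e\<^sub>S\<close> to have product \<open>+1\<close>,
  so an even number of struts is reversed.
\<close>

lemma xor_cancel_left: "xor (p::nat) (xor p q) = q"
  by (simp flip: xor.assoc)

lemma xor_eq_0_iff: "xor (p::nat) q = 0 \<longleftrightarrow> p = q"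
  by (metis xor_cancel_left xor_self_eq)

lemma xor_eq_left_iff:
  "xor (p::nat) q = p \<longleftrightarrow> q = 0" "p = xor p q \<longleftrightarrow> q = 0"
  by (metis xor_cancel_left xor_self_eq)+

lemma xor_eq_right_iff:
  "xor (p::nat) q = q \<longleftrightarrow> p = 0" "q = xor p q \<longleftrightarrow> p = 0"
  using xor_eq_left_iff[of q p] by (simp_all add: xor.commute)

lemma xor_less_power: "(u::nat) < 2^m \<Longrightarrow> v < 2^m \<Longrightarrow> xor u v < 2^m"
  by (metis take_bit_nat_eq_self_iff take_bit_xor)

lemma and_power_eq_0:
  assumes "(u::nat) < 2^m"
  shows "and u (2^m) = 0"
proof -
  have "and u (2^m) = and (take_bit m u) (2^m)"
    using assms by (simp add: take_bit_nat_eq_self)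
  also have "\<dots> = 0"
    by (rule bit_eqI) (auto simp: bit_and_iff bit_take_bit_iff bit_exp_iff)
  finally show ?thesis .
qed

lemma add_top_bit_eq_xor:
  assumes "(u::nat) < 2^m"
  shows "u + of_bool b * 2^m = xor u (of_bool b * 2^m)"
proof (cases b)
  case True
  then show ?thesis using disjunctive_add_eq_xor[OF and_power_eq_0[OF assms]] by simp
qed simp

lemma xor_add_top_bit:
  assumes "(u::nat) < 2^m" "v < 2^m"
  shows "xor (u + of_bool b * 2^m) (v + of_bool c * 2^m) = xor u v + of_bool (b \<noteq> c) * 2^m"
proof -
  have top: "xor (of_bool b * 2^m) (of_bool c * 2^m) = (of_bool (b \<noteq> c) * 2^m :: nat)"
    by (cases b; cases c) simp_all
  have "xor (u + of_bool b * 2^m) (v + of_bool c * 2^m)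
      = xor (xor u (of_bool b * 2^m)) (xor v (of_bool c * 2^m))"
    using add_top_bit_eq_xor[OF assms(1)] add_top_bit_eq_xor[OF assms(2)] by metis
  also have "\<dots> = xor (xor u v) (of_bool (b \<noteq> c) * 2^m)"
    unfolding top[symmetric] by (simp only: xor.assoc xor.left_commute)
  also have "\<dots> = xor u v + of_bool (b \<noteq> c) * 2^m"
    using add_top_bit_eq_xor[OF xor_less_power[OF assms]] by metis
  finally show ?thesis .
qed

lemma less_power_Suc_split:
  assumes "(x::nat) < 2^Suc m"
  obtains x0 b where "x0 < 2^m" "x = x0 + of_bool b * 2^m"
proof (cases "x < 2^m")
  case True
  show ?thesis by (rule that[of x False]) (use True in simp_all)
next
  case False
  have "x - 2^m < 2^m" using assms False by simp
  moreover have "x = (x - 2^m) + of_bool True * 2^m" using False by simp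
  ultimately show ?thesis by (rule that)
qed

lemma cdsign_cases: "cdsign n p q = 1 \<or> cdsign n p q = -1"
  by (induction n arbitrary: p q) (auto simp: cj_def)

definition comm_sign :: "nat \<Rightarrow> nat \<Rightarrow> int" where
  "comm_sign p q = (if p \<noteq> 0 \<and> q \<noteq> 0 \<and> p \<noteq> q then -1 else 1)"

lemma cdsign_commute:
  "p < 2^n \<Longrightarrow> q < 2^n \<Longrightarrow> cdsign n q p = comm_sign p q * cdsign n p q"
proof (induction n arbitrary: p q)
  case 0
  then show ?case by (simp add: comm_sign_def)
next
  case (Suc m)
  consider "p < 2^m" "q < 2^m" | "p < 2^m" "\<not> q < 2^m" | "\<not> p < 2^m" "q < 2^m"
    | "\<not> p < 2^m" "\<not> q < 2^m" by blast
  then show ?case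
  proof cases
    case 1
    then show ?thesis using Suc.IH[of p q] by simp
  next
    case 2
    then show ?thesis by (simp add: comm_sign_def cj_def)
  next
    case 3
    then show ?thesis using cdsign_cases[of m "p - 2^m" q] by (auto simp: comm_sign_def cj_def)
  next
    case 4
    then show ?thesis
      using Suc.IH[of "p - 2^m" "q - 2^m"] Suc.prems cdsign_cases[of m "p - 2^m" "q - 2^m"]
      by (auto simp: comm_sign_def cj_def)
  qed
qed

text \<open>The sign picked up by \<open>e\<^sub>u e\<^sub>v\<close> when both units acquire top bits \<open>b\<close>, \<open>c\<close>
  in the doubling \<open>(p, q)(r, s) = (pr - s\<^sup>*q, sp + qr\<^sup>*)\<close>.\<close>
definition doubling_sign :: "nat \<Rightarrow> nat \<Rightarrow> bool \<Rightarrow> bool \<Rightarrow> int" where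
  "doubling_sign u v b c =
     (if c then comm_sign u v else 1) * (if b \<and> v \<noteq> 0 then -1 else 1) * (if b \<and> c then -1 else 1)"

lemma cdsign_double:
  assumes "u < 2^m" "v < 2^m"
  shows "cdsign (Suc m) (u + of_bool b * 2^m) (v + of_bool c * 2^m)
    = cdsign m u v * doubling_sign u v b c"
  using assms cdsign_commute[OF assms] by (cases b; cases c) (auto simp: doubling_sign_def cj_def)

definition cycle_sign :: "nat \<Rightarrow> nat \<Rightarrow> int" where
  "cycle_sign p q = (if q \<noteq> 0 \<and> (p = 0 \<or> p = q) then -1 else 1)"

lemma cycle_sign_double:
  assumes "p < 2^m" "q < 2^m"
  shows "cycle_sign (p + of_bool b * 2^m) (q + of_bool c * 2^m)
    = cycle_sign p q * (doubling_sign p q b c * doubling_sign q (xor p q) c (b \<noteq> c))"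
  using assms by (cases b; cases c)
    (auto simp: cycle_sign_def doubling_sign_def comm_sign_def
      xor_eq_0_iff xor_eq_left_iff xor_eq_right_iff)

lemma cdsign_cycle:
  "p < 2^n \<Longrightarrow> q < 2^n \<Longrightarrow> cdsign n p q * cdsign n q (xor p q) = cycle_sign p q"
proof (induction n arbitrary: p q)
  case 0
  then show ?case by (simp add: cycle_sign_def)
next
  case (Suc m)
  obtain p0 b where p: "p0 < 2^m" "p = p0 + of_bool b * 2^m"
    using less_power_Suc_split[OF Suc.prems(1)] .
  obtain q0 c where q: "q0 < 2^m" "q = q0 + of_bool c * 2^m"
    using less_power_Suc_split[OF Suc.prems(2)] .
  have pq: "xor p q = xor p0 q0 + of_bool (b \<noteq> c) * 2^m"
    using p q by (simp add: xor_add_top_bit)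
  have "cdsign (Suc m) p q * cdsign (Suc m) q (xor p q)
      = (cdsign m p0 q0 * cdsign m q0 (xor p0 q0))
        * (doubling_sign p0 q0 b c * doubling_sign q0 (xor p0 q0) c (b \<noteq> c))"
    unfolding pq unfolding p(2) q(2) using p(1) q(1)
    by (simp only: cdsign_double xor_less_power) (simp only: ac_simps)
  also have "\<dots> = cycle_sign p q"
    using Suc.IH[OF p(1) q(1)] cycle_sign_double[OF p(1) q(1)] p(2) q(2) by simp
  finally show ?case .
qed

definition fano_product :: "nat \<Rightarrow> nat \<Rightarrow> nat \<Rightarrow> nat \<Rightarrow> int" where
  "fano_product n x y z = cdsign n x y * cdsign n x z * cdsign n x (xor y z) * cdsign n y z
     * cdsign n y (xor x z) * cdsign n (xor x y) z * cdsign n (xor x y) (xor x z)"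

definition fano_sign :: "nat \<Rightarrow> nat \<Rightarrow> nat \<Rightarrow> int" where
  "fano_sign x y z =
     (if x \<noteq> 0 \<and> (y = 0 \<or> z = 0 \<or> x = y \<or> x = z \<or> y = z \<or> z = xor x y) then -1 else 1)"

lemma comm_sign_xor: "comm_sign p q = (if p \<noteq> 0 \<and> q \<noteq> 0 \<and> xor p q \<noteq> 0 then -1 else 1)"
  by (simp add: comm_sign_def xor_eq_0_iff)

lemma fano_sign_xor:
  "fano_sign x y z = (if x = 0 \<or> (y \<noteq> 0 \<and> z \<noteq> 0 \<and> xor x y \<noteq> 0 \<and> xor x z \<noteq> 0
     \<and> xor y z \<noteq> 0 \<and> xor x (xor y z) \<noteq> 0) then 1 else -1)"
  by (auto simp: fano_sign_def xor_eq_0_iff simp flip: xor.assoc)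

lemma fano_sign_double:
  assumes "x < 2^m" "y < 2^m" "z < 2^m"
  shows "fano_sign (x + of_bool a * 2^m) (y + of_bool b * 2^m) (z + of_bool c * 2^m)
    = fano_sign x y z * (doubling_sign x y a b * doubling_sign x z a c
      * doubling_sign x (xor y z) a (b \<noteq> c) * doubling_sign y z b c
      * doubling_sign y (xor x z) b (a \<noteq> c) * doubling_sign (xor x y) z (a \<noteq> b) c
      * doubling_sign (xor x y) (xor x z) (a \<noteq> b) (a \<noteq> c))"
  using assms
  by (simp add: fano_sign_xor doubling_sign_def comm_sign_xor xor_add_top_bit xor_less_power,
      simp add: xor.assoc xor_cancel_left xor.commute xor.left_commute)
    (cases a; cases b; cases c; auto simp: xor_eq_0_iff xor_eq_left_iff xor_eq_right_iff)

lemma fano_product_eq_fano_sign: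
  "x < 2^n \<Longrightarrow> y < 2^n \<Longrightarrow> z < 2^n \<Longrightarrow> fano_product n x y z = fano_sign x y z"
proof (induction n arbitrary: x y z)
  case 0
  then show ?case by (simp add: fano_product_def fano_sign_def)
next
  case (Suc m)
  obtain x0 a where x: "x0 < 2^m" "x = x0 + of_bool a * 2^m"
    using less_power_Suc_split[OF Suc.prems(1)] .
  obtain y0 b where y: "y0 < 2^m" "y = y0 + of_bool b * 2^m"
    using less_power_Suc_split[OF Suc.prems(2)] .
  obtain z0 c where z: "z0 < 2^m" "z = z0 + of_bool c * 2^m"
    using less_power_Suc_split[OF Suc.prems(3)] .
  have xy: "xor x y = xor x0 y0 + of_bool (a \<noteq> b) * 2^m"
    and xz: "xor x z = xor x0 z0 + of_bool (a \<noteq> c) * 2^m"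
    and yz: "xor y z = xor y0 z0 + of_bool (b \<noteq> c) * 2^m"
    using x y z by (simp_all add: xor_add_top_bit)
  have "fano_product (Suc m) x y z = fano_product m x0 y0 z0
    * (doubling_sign x0 y0 a b * doubling_sign x0 z0 a c
      * doubling_sign x0 (xor y0 z0) a (b \<noteq> c) * doubling_sign y0 z0 b c
      * doubling_sign y0 (xor x0 z0) b (a \<noteq> c) * doubling_sign (xor x0 y0) z0 (a \<noteq> b) c
      * doubling_sign (xor x0 y0) (xor x0 z0) (a \<noteq> b) (a \<noteq> c))"
    unfolding fano_product_def xy xz yz unfolding x(2) y(2) z(2) using x(1) y(1) z(1)
    by (simp only: cdsign_double xor_less_power) (simp only: ac_simps)
  also have "\<dots> = fano_sign x y z"
    using Suc.IH[OF x(1) y(1) z(1)] fano_sign_double[OF x(1) y(1) z(1)] x(2) y(2) z(2) by simp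
  finally show ?case .
qed

lemma cpo_rotate: "cpo N p q r \<Longrightarrow> cpo N q r p"
  using cdsign_cycle[of p N q] by (auto simp: cpo_def cycle_sign_def xor.left_commute)

lemma cpo_commute_sign: "cpo N p q r \<Longrightarrow> cdsign N q p = -1"
  using cdsign_commute[of p N q] by (auto simp: cpo_def comm_sign_def)

lemma cpo_strut_iff:
  assumes "0 < z" "z < 2^N" "0 < S" "S < 2^N" "z \<noteq> S"
  shows "cpo N z S (xor z S) \<longleftrightarrow> cdsign N z S = 1"
  using assms xor_less_power[OF assms(2,4)]
  by (auto simp: cpo_def xor_eq_0_iff xor_eq_left_iff xor_eq_right_iff)

lemma box_kite_zigzag_strut_signs:
  assumes "box_kite N S a b c d e f" "0 < S"
  shows "cdsign N a S * cdsign N b S * cdsign N c S = 1"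
proof -
  have sails: "cpo N a b c" "cpo N a d e" "cpo N d b f" "cpo N e f c"
    and struts: "xor a f = S" "xor b e = S" "xor c d = S"
    and assessors: "\<forall>l\<in>{a,b,c,d,e,f}. is_assessor N S l"
    using assms(1) unfolding box_kite_def by blast+
  have "S < 2^N"
  proof -
    have "S < 2^(N-1)"
      using struts(1) assessors xor_less_power[of a "N - 1" f] by (auto simp: is_assessor_def)
    also have "\<dots> \<le> 2^N" by simp
    finally show ?thesis .
  qed
  have c: "xor a b = c" using sails(1) by (simp add: cpo_def)
  have f: "xor a S = f" and e: "xor b S = e" and d: "xor c S = d"
    using struts by (metis xor_cancel_left)+
  have "cdsign N a e = -1"
    using cpo_commute_sign[OF cpo_rotate[OF cpo_rotate[OF sails(2)]]] .
  moreover have "cdsign N b f = 1"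
    using cpo_rotate[OF sails(3)] by (simp add: cpo_def)
  moreover have "cdsign N c f = -1"
    using cpo_commute_sign[OF cpo_rotate[OF sails(4)]] .
  moreover have "cdsign N a b = 1"
    using sails(1) by (simp add: cpo_def)
  moreover have "fano_sign a b S = 1"
    using assms(2) assessors c d e f xor.assoc[of a b S]
    by (auto simp: fano_sign_def is_assessor_def)
  then have "fano_product N a b S = 1"
    using fano_product_eq_fano_sign[of a N b S] sails(1) \<open>S < 2^N\<close> by (simp add: cpo_def)
  ultimately show ?thesis
    unfolding fano_product_def c e f by (simp add: ac_simps)
qed

lemma card_sign_flips_even:
  fixes g :: "nat \<Rightarrow> int"
  assumes "distinct [a, b, c]" "\<forall>z\<in>{a, b, c}. g z = 1 \<or> g z = -1" "g a * g b * g c = 1"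
  shows "card {z \<in> {a, b, c}. g z \<noteq> 1} \<in> {0, 2}"
proof -
  have "{z \<in> {a, b, c}. g z \<noteq> 1}
      = (if g a = 1 then {} else {a}) \<union> (if g b = 1 then {} else {b}) \<union> (if g c = 1 then {} else {c})"
    by auto
  then show ?thesis
    using assms by (cases "g a = 1"; cases "g b = 1"; cases "g c = 1") auto
qed

theorem lemma7:
  fixes N S a b c d e f :: nat
  assumes "N \<ge> 4"
    and "0 < S" and "S < 2^(N-1)"
    and "box_kite N S a b c d e f"
    and "a < b" and "a < c"
    and "neg_edge N S a b" and "neg_edge N S b c" and "neg_edge N S a c"
  shows "card {z \<in> {a,b,c}. \<not> cpo N z S (xor z S)} \<in> {0, 2}"
proof -
  have zigzag: "cpo N a b c" and assessors: "\<forall>l\<in>{a,b,c}. is_assessor N S l"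
    using assms(4) unfolding box_kite_def by blast+
  have half: "(2::nat)^(N-1) \<le> 2^N" by simp
  have "cpo N z S (xor z S) \<longleftrightarrow> cdsign N z S = 1" if "z \<in> {a,b,c}" for z
    using that assessors assms(2,3)
    by (intro cpo_strut_iff) (auto simp: is_assessor_def intro: less_le_trans[OF _ half])
  then have "{z \<in> {a,b,c}. \<not> cpo N z S (xor z S)} = {z \<in> {a,b,c}. cdsign N z S \<noteq> 1}"
    by blast
  also have "card \<dots> \<in> {0, 2}"
    using zigzag cdsign_cases box_kite_zigzag_strut_signs[OF assms(4,2)]
    by (intro card_sign_flips_even) (auto simp: cpo_def)
  finally show ?thesis .
qed

end
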